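(* Let $\mathcal{O}=\mathcal{F}_\mathcal{M}/(\mathcal{G})$ be a shuffle operad with monomial relations $\mathcal{G}$, and assume that for every tree monomial $T$ the set of divisors of $T$ that are relations admits an Anick numbering $S_1,\dots,S_p$, which we fix. Then for each tree monomial $T$, a basis of $H^Q_T(\mathcal{O})$ is in one-to-one correspondence with the basis elements $v$ of $(\mathcal{A}_\mathcal{G})^{ab}_T$ for which the following two properties hold: (I) for each $S_j$ present in $v$, $\partial_j(v)$ is decomposable (i.e. equals $0$ in $(\mathcal{A}_\mathcal{G})^{ab}$); (II) for each $S_j$ not present in $v$, there exists $i<j$ such that $\partial_i(v\wedge S_j)$ is indecomposable (i.e. nonzero in $(\mathcal{A}_\mathcal{G})^{ab}$).
   Context: $\mathcal{F}_\mathcal{M}$ is the free shuffle operad on a collection $\mathcal{M}$ over a field; it has a basis of tree monomials. A divisor of a tree monomial $T$ is an occurrence in $T$ of a subtree containing, with each vertex, all its incoming and outgoing edges; it determines a tree monomial by keeping decorations and relabelling leaves in order of the smallest leaf of $T$ reachable through them; it is a relation if this tree monomial lies in $\mathcal{G}$. An Anick numbering of the divisors of $T$ that are relations is a numbering $S_1,\dots,S_p$ such that whenever $i<j<k$ and $S_i\cap S_j\ne\varnothing$ we have $S_i\cap S_k\subset S_j\cap S_k$ (naive intersections of subtrees in $T$). For a tree monomial $T$ with relation divisors $S_1,\dots,S_p$, consider the elements $T\otimes S_{i_1}\wedge\cdots\wedge S_{i_q}$ of $\mathbb{k}T\otimes\Lambda(S_1,\dots,S_p)$ (exterior algebra, $S_i$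 of degree $1$), with the degree $-1$ derivations $\partial_i$, $\partial_i(S_j)=\delta_{ij}$. Such an element is indecomposable if every edge of $T$ joining two internal vertices of $T$ joins two internal vertices of at least one of $S_{i_1},\dots,S_{i_q}$, and decomposable otherwise. $(\mathcal{A}_\mathcal{G})^{ab}_T$ is the chain complex with basis the indecomposable elements with underlying tree monomial $T$ (these are the indecomposable generators of the free dg shuffle operad resolution $\mathcal{A}_\mathcal{G}$ of $\mathcal{O}$ with underlying tree $T$) and differential $\sum_i\bar\partial_i$, where $\bar\partial_i(v)=\partial_i(v)$ if $\partial_i(v)$ is indecomposable and $\bar\partial_i(v)=0$ otherwise; $H^Q_T(\mathcal{O})$ denotes its homology (the $T$-component of the Quillen homology of $\mathcal{O}$, which is the direct sum of these over all $T$). *)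

theory Defs
  imports Complex_Main "HOL-Library.Function_Algebras"
begin

text \<open>A tree monomial: a rooted planar tree whose internal vertices are decorated
by basis elements of the collection M (of type 'm, with arity function ar) and
whose leaves carry labels 1..n.\<close>

datatype 'm tree = Leaf nat | Node 'm "'m tree list"

fun leaves :: "'m tree \<Rightarrow> nat list" where
  "leaves (Leaf i) = [i]"
| "leaves (Node m ts) = concat (map leaves ts)"

definition minleaf :: "'m tree \<Rightarrow> nat" where
  "minleaf t = Min (set (leaves t))"

fun wf_shuffle :: "('m \<Rightarrow> nat) \<Rightarrow> 'm tree \<Rightarrow> bool" where
  "wf_shuffle ar (Leaf i) = True"
| "wf_shuffle ar (Node m ts) =
     (length ts = ar m \<and> ts \<noteq> [] \<and> (\<forall>t\<in>set ts. wf_shuffle ar t)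
      \<and> sorted_wrt (<) (map minleaf ts))"

definition tree_monomial :: "('m \<Rightarrow> nat) \<Rightarrow> 'm tree \<Rightarrow> bool" where
  "tree_monomial ar T \<longleftrightarrow> wf_shuffle ar T \<and> distinct (leaves T)
      \<and> set (leaves T) = {1..length (leaves T)}"

fun sub :: "'m tree \<Rightarrow> nat list \<Rightarrow> 'm tree option" where
  "sub t [] = Some t"
| "sub (Leaf _) (i # p) = None"
| "sub (Node m ts) (i # p) = (if i < length ts then sub (ts ! i) p else None)"

definition vertices :: "'m tree \<Rightarrow> nat list set" where
  "vertices T = {p. \<exists>m ts. sub T p = Some (Node m ts)}"

definition internal_edges :: "'m tree \<Rightarrow> (nat list \<times> nat list) set" where
  "internal_edges T = {(p, q). p \<in> vertices T \<and> q \<in> vertices T \<and> (\<exists>k. q = p @ [k])}"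

text \<open>A divisor (occurrence of a subtree containing, with each vertex, all its
incident edges) is determined by its nonempty connected set of internal vertices.\<close>
definition is_divisor :: "'m tree \<Rightarrow> nat list set \<Rightarrow> bool" where
  "is_divisor T D \<longleftrightarrow> D \<noteq> {} \<and> D \<subseteq> vertices T \<and>
     (\<exists>r\<in>D. \<forall>p\<in>D. \<exists>u. p = r @ u \<and> (\<forall>k\<le>length u. r @ take k u \<in> D))"

definition div_root :: "nat list set \<Rightarrow> nat list" where
  "div_root D = (THE r. r \<in> D \<and> (\<forall>p\<in>D. \<exists>u. p = r @ u))"

text \<open>Cut out the divisor: vertices of D are kept, every edge leaving D downwards
becomes a leaf labelled by the smallest leaf of T reachable through it.\<close>
function ext :: "nat list set \<Rightarrow> nat list \<Rightarrow> 'm tree \<Rightarrow> 'm tree" where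
  "ext D p (Leaf i) = Leaf i"
| "ext D p (Node m ts) =
     (if p \<in> D then Node m (map (\<lambda>i. ext D (p @ [i]) (ts ! i)) [0..<length ts])
      else Leaf (minleaf (Node m ts)))"
  by pat_completeness auto
termination
  by (relation "measure (\<lambda>(D, p, t). size t)")
     (auto simp: size_list_estimation' dest!: nth_mem intro: le_imp_less_Suc)

fun map_leaves :: "(nat \<Rightarrow> nat) \<Rightarrow> 'm tree \<Rightarrow> 'm tree" where
  "map_leaves f (Leaf i) = Leaf (f i)"
| "map_leaves f (Node m ts) = Node m (map (map_leaves f) ts)"

definition relabel :: "'m tree \<Rightarrow> 'm tree" where
  "relabel t = map_leaves (\<lambda>x. card {y \<in> set (leaves t). y \<le> x}) t"

definition divisor_monomial :: "'m tree \<Rightarrow> nat list set \<Rightarrow> 'm tree" where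
  "divisor_monomial T D = relabel (ext D (div_root D) (the (sub T (div_root D))))"

definition relation_divisors :: "'m tree set \<Rightarrow> 'm tree \<Rightarrow> nat list set set" where
  "relation_divisors G T = {D. is_divisor T D \<and> divisor_monomial T D \<in> G}"

text \<open>Anick numbering S_0, ..., S_(p-1) (0-based) of the relation divisors,
intersections taken as sets of vertices.\<close>
definition anick_numbering :: "'m tree set \<Rightarrow> 'm tree \<Rightarrow> nat list set list \<Rightarrow> bool" where
  "anick_numbering G T Ss \<longleftrightarrow> distinct Ss \<and> set Ss = relation_divisors G T \<and>
     (\<forall>i j k. i < j \<and> j < k \<and> k < length Ss \<and> Ss ! i \<inter> Ss ! j \<noteq> {}
        \<longrightarrow> Ss ! i \<inter> Ss ! k \<subseteq> Ss ! j \<inter> Ss ! k)"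

text \<open>An element T \<otimes> S_{i_1} \<and> ... \<and> S_{i_q} is encoded by the index set
{i_1,...,i_q} \<subseteq> {0..<p}.\<close>
definition indecomposable :: "'m tree \<Rightarrow> nat list set list \<Rightarrow> nat set \<Rightarrow> bool" where
  "indecomposable T Ss I \<longleftrightarrow> I \<subseteq> {0..<length Ss} \<and>
     (\<forall>(p, q)\<in>internal_edges T. \<exists>i\<in>I. p \<in> Ss ! i \<and> q \<in> Ss ! i)"

definition ab_basis :: "'m tree \<Rightarrow> nat list set list \<Rightarrow> nat set set" where
  "ab_basis T Ss = {I. indecomposable T Ss I}"

text \<open>Sign of the derivation \<partial>_i on the wedge of the S_k, k \<in> I, in increasing order.\<close>
definition wsign :: "nat set \<Rightarrow> nat \<Rightarrow> 'k::field" where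
  "wsign I i = (- 1) ^ card {k \<in> I. k < i}"

definition chains :: "'m tree \<Rightarrow> nat list set list \<Rightarrow> (nat set \<Rightarrow> 'k::field) set" where
  "chains T Ss = {f. \<forall>J. J \<notin> ab_basis T Ss \<longrightarrow> f J = 0}"

text \<open>The differential \<Sum>_i \<partial>bar_i in coordinates: the coefficient of a basis
element J in d(f) collects the contributions of \<partial>bar_i(I) = \<pm> J for I = J \<union> {i}
(\<partial>bar_i(I) is nonzero only when i \<in> I and I - {i} is indecomposable).\<close>
definition ab_diff :: "'m tree \<Rightarrow> nat list set list \<Rightarrow> (nat set \<Rightarrow> 'k::field) \<Rightarrow> nat set \<Rightarrow> 'k" where
  "ab_diff T Ss f J =
     (if J \<in> ab_basis T Ss then
        (\<Sum>i\<in>{0..<length Ss} - J.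
           if insert i J \<in> ab_basis T Ss then wsign (insert i J) i * f (insert i J) else 0)
      else 0)"

definition fscale :: "'k::field \<Rightarrow> (nat set \<Rightarrow> 'k) \<Rightarrow> nat set \<Rightarrow> 'k" where
  "fscale c f = (\<lambda>x. c * f x)"

definition quillen_homology_dim :: "'k::field itself \<Rightarrow> 'm tree \<Rightarrow> nat list set list \<Rightarrow> nat" where
  "quillen_homology_dim _ T Ss =
     vector_space.dim (fscale :: 'k \<Rightarrow> _) {f \<in> chains T Ss. ab_diff T Ss f = (\<lambda>_. 0 :: 'k)}
     - vector_space.dim (fscale :: 'k \<Rightarrow> _) (ab_diff T Ss ` (chains T Ss :: (nat set \<Rightarrow> 'k) set))"

definition critical_elements :: "'m tree \<Rightarrow> nat list set list \<Rightarrow> nat set set" where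
  "critical_elements T Ss = {I \<in> ab_basis T Ss.
     (\<forall>j\<in>I. I - {j} \<notin> ab_basis T Ss) \<and>
     (\<forall>j<length Ss. j \<notin> I \<longrightarrow>
        (\<exists>i<j. i \<in> insert j I \<and> insert j I - {i} \<in> ab_basis T Ss))}"

end

theory Submission
  imports Defs
begin

text \<open>
  Only the pattern of which index sets cover the internal edges matters, so the complex is
  studied for an arbitrary edge set \<open>A\<close>, index set \<open>X\<close> and family \<open>S\<close> (an edge is covered
  by \<open>S i\<close> if both its ends lie in \<open>S i\<close>); the Anick condition is the only property of \<open>S\<close>
  that is used. Let \<open>x\<^sub>0\<close> be the least index. If no edge lies in \<open>S x\<^sub>0\<close>, wedging with
  \<open>S x\<^sub>0\<close> is a contracting homotopy and the complex is acyclic. Otherwise the Anick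
  condition makes the sets \<open>K e\<close> of indices \<open>k \<noteq> x\<^sub>0\<close> covering an edge \<open>e\<close> of \<open>S x\<^sub>0\<close> a chain;
  let \<open>R\<close> be its least member. Up to the same homotopy, the complex is the shift, by adding
  \<open>x\<^sub>0\<close>, of the complex of the edges outside \<open>S x\<^sub>0\<close> on the indices outside \<open>{x\<^sub>0} \<union> R\<close>, and
  the critical elements correspond in the same way. By induction on the number of indices,
  the homology is zero when there is no critical element and is spanned by one cycle when
  there is exactly one, and these are the only two cases.
\<close>

definition covers :: "('v \<times> 'v) set \<Rightarrow> (nat \<Rightarrow> 'v set) \<Rightarrow> nat set \<Rightarrow> bool" where
  "covers A S I \<longleftrightarrow> (\<forall>e\<in>A. \<exists>i\<in>I. e \<in> S i \<times> S i)"

definition covering :: "('v \<times> 'v) set \<Rightarrow> nat set \<Rightarrow> (nat \<Rightarrow> 'v set) \<Rightarrow> nat set set" where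
  "covering A X S = {I. I \<subseteq> X \<and> covers A S I}"

definition cover_chains ::
    "('v \<times> 'v) set \<Rightarrow> nat set \<Rightarrow> (nat \<Rightarrow> 'v set) \<Rightarrow> (nat set \<Rightarrow> 'k::field) set" where
  "cover_chains A X S = {f. \<forall>J. J \<notin> covering A X S \<longrightarrow> f J = 0}"

definition cover_diff ::
    "('v \<times> 'v) set \<Rightarrow> nat set \<Rightarrow> (nat \<Rightarrow> 'v set) \<Rightarrow> (nat set \<Rightarrow> 'k::field) \<Rightarrow> nat set \<Rightarrow> 'k" where
  "cover_diff A X S f J =
     (if J \<in> covering A X S then
        (\<Sum>i\<in>X - J. if insert i J \<in> covering A X S then wsign (insert i J) i * f (insert i J) else 0)
      else 0)"

definition cover_critical :: "('v \<times> 'v) set \<Rightarrow> nat set \<Rightarrow> (nat \<Rightarrow> 'v set) \<Rightarrow> nat set set" where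
  "cover_critical A X S = {I \<in> covering A X S.
     (\<forall>j\<in>I. I - {j} \<notin> covering A X S) \<and>
     (\<forall>j\<in>X. j \<notin> I \<longrightarrow> (\<exists>i<j. i \<in> insert j I \<and> insert j I - {i} \<in> covering A X S))}"

definition anick_family :: "nat set \<Rightarrow> (nat \<Rightarrow> 'v set) \<Rightarrow> bool" where
  "anick_family X S \<longleftrightarrow> (\<forall>i\<in>X. \<forall>j\<in>X. \<forall>k\<in>X.
     i < j \<and> j < k \<and> S i \<inter> S j \<noteq> {} \<longrightarrow> S i \<inter> S k \<subseteq> S j \<inter> S k)"

lemma anick_family_subset: "anick_family X S \<Longrightarrow> Y \<subseteq> X \<Longrightarrow> anick_family Y S"
  unfolding anick_family_def by (meson subsetD)

lemma covers_mono: "covers A S I \<Longrightarrow> I \<subseteq> J \<Longrightarrow> covers A S J"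
  unfolding covers_def by (meson subsetD)

lemma covers_Un: "covers (A \<union> B) S I \<longleftrightarrow> covers A S I \<and> covers B S I"
  unfolding covers_def by blast

lemma covering_subset: "I \<in> covering A X S \<Longrightarrow> I \<subseteq> X"
  unfolding covering_def by blast

lemma covering_mono: "I \<in> covering A X S \<Longrightarrow> I \<subseteq> J \<Longrightarrow> J \<subseteq> X \<Longrightarrow> J \<in> covering A X S"
  unfolding covering_def using covers_mono by blast

lemma finite_covering: "finite X \<Longrightarrow> finite (covering A X S)"
  unfolding covering_def by (rule finite_subset[of _ "Pow X"]) auto

lemma cover_criticalD:
  assumes "I \<in> cover_critical A X S"
  shows "I \<in> covering A X S" "\<And>j. j \<in> I \<Longrightarrow> I - {j} \<notin> covering A X S"
    "\<And>j. j \<in> X \<Longrightarrow> j \<notin> I \<Longrightarrow> \<exists>i<j. i \<in> insert j I \<and> insert j I - {i} \<in> covering A X S"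
  using assms unfolding cover_critical_def by blast+

lemma cover_criticalI:
  assumes "I \<in> covering A X S" "\<And>j. j \<in> I \<Longrightarrow> I - {j} \<notin> covering A X S"
    "\<And>j. j \<in> X \<Longrightarrow> j \<notin> I \<Longrightarrow> \<exists>i<j. i \<in> insert j I \<and> insert j I - {i} \<in> covering A X S"
  shows "I \<in> cover_critical A X S"
  using assms unfolding cover_critical_def by blast

lemma cover_diff_covering:
  assumes "J \<in> covering A X S"
  shows "cover_diff A X S f J = (\<Sum>i\<in>X - J. wsign (insert i J) i * f (insert i J))"
proof -
  have "insert i J \<in> covering A X S" if "i \<in> X - J" for i
    using covering_mono[OF assms] covering_subset[OF assms] that by blast
  then show ?thesis
    unfolding cover_diff_def using assms by (auto intro!: sum.cong)
qed

lemma cover_diff_not_covering: "J \<notin> covering A X S \<Longrightarrow> cover_diff A X S f J = 0"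
  unfolding cover_diff_def by simp

lemma cover_diff_in_chains: "cover_diff A X S f \<in> cover_chains A X S"
  unfolding cover_chains_def using cover_diff_not_covering by blast

lemma cover_diff_add:
  fixes f g :: "nat set \<Rightarrow> 'k::field"
  shows "cover_diff A X S (\<lambda>I. f I + g I) J = cover_diff A X S f J + cover_diff A X S g J"
proof -
  have "(if P then w * (a + b) else 0) = (if P then w * a else 0) + (if P then w * b else 0)"
    for P and w a b :: 'k
    by (simp add: distrib_left)
  then show ?thesis
    unfolding cover_diff_def by (simp add: sum.distrib[symmetric])
qed

lemma cover_diff_diff:
  fixes f g :: "nat set \<Rightarrow> 'k::field"
  shows "cover_diff A X S (\<lambda>I. f I - g I) J = cover_diff A X S f J - cover_diff A X S g J"
proof -
  have "(if P then w * (a - b) else 0) = (if P then w * a else 0) - (if P then w * b else 0)"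
    for P and w a b :: 'k
    by (simp add: right_diff_distrib)
  then show ?thesis
    unfolding cover_diff_def by (simp add: sum_subtractf[symmetric])
qed

lemma cover_diff_scale:
  fixes f :: "nat set \<Rightarrow> 'k::field"
  shows "cover_diff A X S (\<lambda>I. c * f I) J = c * cover_diff A X S f J"
proof -
  have "(if P then w * (c * a) else 0) = c * (if P then w * a else 0)" for P and w a :: 'k
    by simp
  then show ?thesis
    unfolding cover_diff_def by (simp add: sum_distrib_left)
qed

lemma cover_diff_zero: "cover_diff A X S (\<lambda>_. 0) = (\<lambda>_. 0)"
  unfolding cover_diff_def by (simp add: fun_eq_iff cong: if_cong)

lemma wsign_insert_swap:
  assumes "finite J" "i < k" "i \<notin> J" "k \<notin> J"
  shows "(wsign (insert i J) i * wsign (insert k (insert i J)) k :: 'k::field)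
       = - (wsign (insert k J) k * wsign (insert i (insert k J)) i)"
proof -
  have "{m \<in> insert k (insert i J). m < k} = insert i {m \<in> J. m < k}"
    "{m \<in> insert i J. m < i} = {m \<in> J. m < i}"
    "{m \<in> insert k J. m < k} = {m \<in> J. m < k}"
    "{m \<in> insert i (insert k J). m < i} = {m \<in> J. m < i}"
    using assms by auto
  moreover have "card (insert i {m \<in> J. m < k}) = Suc (card {m \<in> J. m < k})"
    using assms by simp
  ultimately show ?thesis
    unfolding wsign_def by simp
qed

lemma wsign_insert_least:
  assumes "\<And>m. m \<in> J \<Longrightarrow> x \<le> m"
  shows "wsign (insert x J) x = (1::'k::field)"
proof -
  have "{m \<in> insert x J. m < x} = {}"
    using assms by force
  then show ?thesis
    unfolding wsign_def by (simp only: card.empty power_0)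
qed

lemma wsign_insert_smaller:
  assumes "finite J" "x < i" "x \<notin> J"
  shows "wsign (insert i (insert x J)) i = - (wsign (insert i J) i :: 'k::field)"
proof -
  have "{m \<in> insert i (insert x J). m < i} = insert x {m \<in> insert i J. m < i}"
    using assms by auto
  moreover have "card (insert x {m \<in> insert i J. m < i}) = Suc (card {m \<in> insert i J. m < i})"
    using assms by simp
  ultimately show ?thesis
    unfolding wsign_def by simp
qed

lemma sum_pairs_antisym_eq_0:
  fixes G :: "nat \<Rightarrow> nat \<Rightarrow> 'a::ab_group_add"
  assumes "finite Y" "\<And>i k. i \<in> Y \<Longrightarrow> k \<in> Y \<Longrightarrow> i < k \<Longrightarrow> G i k = - G k i"
  shows "(\<Sum>i\<in>Y. \<Sum>k\<in>Y - {i}. G i k) = 0"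
proof -
  have split: "(\<Sum>k\<in>Y - {i}. G i k) = (\<Sum>k\<in>{k\<in>Y. k < i}. G i k) + (\<Sum>k\<in>{k\<in>Y. i < k}. G i k)"
    for i
  proof -
    have "Y - {i} = {k\<in>Y. k < i} \<union> {k\<in>Y. i < k}"
      by auto
    then show ?thesis
      using assms(1) by (simp add: sum.union_disjoint[symmetric] disjoint_iff)
  qed
  have "(\<Sum>i\<in>Y. \<Sum>k\<in>{k\<in>Y. i < k}. G i k) = (\<Sum>k\<in>Y. \<Sum>i\<in>{i\<in>Y. i < k}. G i k)"
    by (rule sum.swap_restrict[OF assms(1) assms(1)])
  also have "\<dots> = - (\<Sum>k\<in>Y. \<Sum>i\<in>{i\<in>Y. i < k}. G k i)"
    by (simp add: sum_negf[symmetric] assms(2))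
  finally show ?thesis
    unfolding split sum.distrib by simp
qed

lemma cover_diff_cover_diff:
  fixes f :: "nat set \<Rightarrow> 'k::field"
  assumes "finite X"
  shows "cover_diff A X S (cover_diff A X S f) J = 0"
proof (cases "J \<in> covering A X S")
  case False
  then show ?thesis
    by (simp add: cover_diff_not_covering)
next
  case True
  have J: "finite J" "J \<subseteq> X"
    using covering_subset[OF True] assms finite_subset by blast+
  have ins: "insert i J \<in> covering A X S" if "i \<in> X - J" for i
    using covering_mono[OF True] J that by auto
  define G where
    "G i k = wsign (insert i J) i * (wsign (insert k (insert i J)) k * f (insert k (insert i J)))"
    for i k
  have "cover_diff A X S (cover_diff A X S f) J = (\<Sum>i\<in>X - J. \<Sum>k\<in>(X - J) - {i}. G i k)"
    unfolding cover_diff_covering[OF True]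
  proof (rule sum.cong[OF refl])
    fix i assume "i \<in> X - J"
    moreover have "X - insert i J = X - J - {i}"
      by auto
    ultimately show "wsign (insert i J) i * cover_diff A X S f (insert i J) = (\<Sum>k\<in>X - J - {i}. G i k)"
      by (simp add: cover_diff_covering[OF ins] sum_distrib_left G_def)
  qed
  also have "\<dots> = 0"
  proof (rule sum_pairs_antisym_eq_0)
    show "finite (X - J)"
      using assms by simp
    fix i k assume "i \<in> X - J" "k \<in> X - J" "i < k"
    then have "(wsign (insert i J) i * wsign (insert k (insert i J)) k :: 'k)
       = - (wsign (insert k J) k * wsign (insert i (insert k J)) i)"
      by (intro wsign_insert_swap) (auto simp: J)
    moreover have "insert k (insert i J) = insert i (insert k J)"
      by auto
    ultimately show "G i k = - G k i"
      unfolding G_def by (simp only: mult.assoc[symmetric]) simp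
  qed
  finally show ?thesis .
qed

definition cover_cycles ::
    "('v \<times> 'v) set \<Rightarrow> nat set \<Rightarrow> (nat \<Rightarrow> 'v set) \<Rightarrow> (nat set \<Rightarrow> 'k::field) set" where
  "cover_cycles A X S = {f \<in> cover_chains A X S. cover_diff A X S f = (\<lambda>_. 0)}"

definition cover_boundaries ::
    "('v \<times> 'v) set \<Rightarrow> nat set \<Rightarrow> (nat \<Rightarrow> 'v set) \<Rightarrow> (nat set \<Rightarrow> 'k::field) set" where
  "cover_boundaries A X S = cover_diff A X S ` cover_chains A X S"

definition generates_homology ::
    "('v \<times> 'v) set \<Rightarrow> nat set \<Rightarrow> (nat \<Rightarrow> 'v set) \<Rightarrow> (nat set \<Rightarrow> 'k::field) \<Rightarrow> bool" where
  "generates_homology A X S z \<longleftrightarrow> z \<in> cover_cycles A X S \<and> z \<notin> cover_boundaries A X S \<and>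
     (\<forall>f\<in>cover_cycles A X S. \<exists>w\<in>cover_boundaries A X S. \<exists>c. f = (\<lambda>I. w I + c * z I))"

definition critical_homology ::
    "('v \<times> 'v) set \<Rightarrow> nat set \<Rightarrow> (nat \<Rightarrow> 'v set) \<Rightarrow> 'k::field itself \<Rightarrow> bool" where
  "critical_homology A X S _ \<longleftrightarrow>
     (cover_critical A X S = {} \<and>
        (cover_cycles A X S :: (nat set \<Rightarrow> 'k) set) \<subseteq> cover_boundaries A X S) \<or>
     (\<exists>I (z :: nat set \<Rightarrow> 'k). cover_critical A X S = {I} \<and> generates_homology A X S z)"

lemma zero_in_cover_chains: "(\<lambda>_. 0) \<in> cover_chains A X S"
  unfolding cover_chains_def by simp

lemma cover_diff_in_boundaries: "f \<in> cover_chains A X S \<Longrightarrow> cover_diff A X S f \<in> cover_boundaries A X S"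
  unfolding cover_boundaries_def by blast

lemma zero_in_cover_boundaries: "(\<lambda>_. 0) \<in> cover_boundaries A X S"
  using cover_diff_in_boundaries[OF zero_in_cover_chains] by (simp add: cover_diff_zero)

lemma cover_boundaries_add:
  fixes x y :: "nat set \<Rightarrow> 'k::field"
  assumes "x \<in> cover_boundaries A X S" "y \<in> cover_boundaries A X S"
  shows "(\<lambda>I. x I + y I) \<in> cover_boundaries A X S"
proof -
  obtain a b where ab: "a \<in> cover_chains A X S" "b \<in> cover_chains A X S"
    "x = cover_diff A X S a" "y = cover_diff A X S b"
    using assms unfolding cover_boundaries_def by blast
  then have "(\<lambda>I. a I + b I) \<in> cover_chains A X S"
    unfolding cover_chains_def by auto
  moreover have "(\<lambda>I. x I + y I) = cover_diff A X S (\<lambda>I. a I + b I)"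
    by (simp add: fun_eq_iff cover_diff_add ab)
  ultimately show ?thesis
    using cover_diff_in_boundaries by metis
qed

lemma cover_boundaries_scale:
  fixes x :: "nat set \<Rightarrow> 'k::field"
  assumes "x \<in> cover_boundaries A X S"
  shows "(\<lambda>I. c * x I) \<in> cover_boundaries A X S"
proof -
  obtain a where a: "a \<in> cover_chains A X S" "x = cover_diff A X S a"
    using assms unfolding cover_boundaries_def by blast
  then have "(\<lambda>I. c * a I) \<in> cover_chains A X S"
    unfolding cover_chains_def by auto
  moreover have "(\<lambda>I. c * x I) = cover_diff A X S (\<lambda>I. c * a I)"
    by (simp add: fun_eq_iff cover_diff_scale a)
  ultimately show ?thesis
    using cover_diff_in_boundaries by metis
qed

lemma cover_boundaries_subset_cycles:
  "finite X \<Longrightarrow> cover_boundaries A X S \<subseteq> (cover_cycles A X S :: (nat set \<Rightarrow> 'k::field) set)"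
  unfolding cover_boundaries_def cover_cycles_def
  using cover_diff_in_chains cover_diff_cover_diff by (auto simp: fun_eq_iff)

lemma critical_homology_no_indices: "critical_homology A {} S TYPE('k::field)"
proof -
  have diff_0: "cover_diff A {} S f = (\<lambda>_. 0)" for f :: "nat set \<Rightarrow> 'k"
    unfolding cover_diff_def by auto
  show ?thesis
  proof (cases "A = {}")
    case True
    have covering: "covering A {} S = {{}}"
      unfolding covering_def covers_def using True by auto
    define z :: "nat set \<Rightarrow> 'k" where "z I = (if I = {} then 1 else 0)" for I
    have "z \<in> cover_cycles A {} S"
      unfolding cover_cycles_def cover_chains_def covering z_def using diff_0 by simp
    moreover have "z \<notin> cover_boundaries A {} S"
      unfolding cover_boundaries_def using diff_0 by (metis image_iff z_def zero_neq_one)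
    moreover have "f = (\<lambda>I. 0 + f {} * z I)" if "f \<in> cover_cycles A {} S" for f
      using that unfolding cover_cycles_def cover_chains_def covering z_def by auto
    then have "\<forall>f\<in>cover_cycles A {} S. \<exists>w\<in>cover_boundaries A {} S. \<exists>c. f = (\<lambda>I. w I + c * z I)"
      using zero_in_cover_boundaries by fast
    moreover have "cover_critical A {} S = {{}}"
      unfolding cover_critical_def covering by auto
    ultimately show ?thesis
      unfolding critical_homology_def generates_homology_def by blast
  next
    case False
    have covering: "covering A {} S = {}"
      unfolding covering_def covers_def using False by auto
    have "f = (\<lambda>_. 0)" if "f \<in> cover_cycles A {} S" for f :: "nat set \<Rightarrow> 'k"
      using that unfolding cover_cycles_def cover_chains_def covering by auto
    then have "cover_cycles A {} S \<subseteq> (cover_boundaries A {} S :: (nat set \<Rightarrow> 'k) set)"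
      using zero_in_cover_boundaries by blast
    moreover have "cover_critical A {} S = {}"
      unfolding cover_critical_def covering by auto
    ultimately show ?thesis
      unfolding critical_homology_def by blast
  qed
qed

subsection \<open>Removing the least index\<close>

locale anick_reduction =
  fixes A :: "('v \<times> 'v) set" and X :: "nat set" and S :: "nat \<Rightarrow> 'v set"
  assumes finite_X: "finite X" and X_nonempty: "X \<noteq> {}" and anick: "anick_family X S"
begin

definition x0 :: nat where "x0 = Min X"
definition A0 :: "('v \<times> 'v) set" where "A0 = A \<inter> S x0 \<times> S x0"
definition A1 :: "('v \<times> 'v) set" where "A1 = A - S x0 \<times> S x0"
definition K :: "'v \<times> 'v \<Rightarrow> nat set" where "K e = {k \<in> X - {x0}. e \<in> S k \<times> S k}"
definition R :: "nat set" where "R = \<Inter> (K ` A0)"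
definition X1 :: "nat set" where "X1 = X - {x0} - R"

lemma x0_in_X: "x0 \<in> X"
  unfolding x0_def using finite_X X_nonempty by simp

lemma x0_le: "k \<in> X \<Longrightarrow> x0 \<le> k"
  unfolding x0_def using finite_X by simp

lemma X1_subset: "X1 \<subseteq> X - {x0}"
  unfolding X1_def by auto

lemma finite_X1: "finite X1"
  using finite_subset[OF X1_subset] finite_X by blast

lemma K_lower:
  assumes "e \<in> S x0 \<times> S x0" "e' \<in> S x0 \<times> S x0" "j \<in> K e" "k \<in> K e'" "j < k"
  shows "j \<in> K e'"
proof -
  have j: "j \<in> X" "j \<noteq> x0" "e \<in> S j \<times> S j" and k: "k \<in> X" "e' \<in> S k \<times> S k"
    using assms(3,4) unfolding K_def by auto
  have "x0 < j"
    using x0_le[OF j(1)] j(2) by simp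
  moreover have "fst e \<in> S x0 \<inter> S j"
    using assms(1) j(3) by (auto simp: mem_Times_iff)
  ultimately have "S x0 \<inter> S k \<subseteq> S j \<inter> S k"
    using anick[unfolded anick_family_def, rule_format, OF x0_in_X j(1) k(1)] assms(5) by blast
  then have "e' \<in> S j \<times> S j"
    using assms(2) k(2) by (auto simp: mem_Times_iff)
  then show ?thesis
    using j unfolding K_def by simp
qed

lemma K_chain:
  assumes "e \<in> S x0 \<times> S x0" "e' \<in> S x0 \<times> S x0"
  shows "K e \<subseteq> K e' \<or> K e' \<subseteq> K e"
proof (rule ccontr)
  assume "\<not> ?thesis"
  then obtain j k where jk: "j \<in> K e" "j \<notin> K e'" "k \<in> K e'" "k \<notin> K e"
    by blast
  then have "j < k \<or> k < j"
    by (metis linorder_neqE_nat)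
  then show False
    using K_lower[OF assms jk(1,3)] K_lower[OF assms(2,1) jk(3,1)] jk(2,4) by blast
qed

lemma R_attained:
  assumes "A0 \<noteq> {}"
  obtains e where "e \<in> A0" "K e = R"
proof -
  have "finite (K ` A0)"
    by (rule finite_subset[of _ "Pow X"]) (auto simp: K_def finite_X)
  moreover have "\<forall>x\<in>K ` A0. \<forall>y\<in>K ` A0. x \<subseteq> y \<or> y \<subseteq> x"
    using K_chain unfolding A0_def by blast
  then have "subset.chain UNIV (K ` A0)"
    unfolding subset_chain_def by blast
  ultimately have "R \<in> K ` A0"
    unfolding R_def using Inter_in_chain assms by blast
  then show ?thesis
    using that by blast
qed

lemma covers_A0_iff:
  assumes "A0 \<noteq> {}" "J \<subseteq> X - {x0}"
  shows "covers A0 S J \<longleftrightarrow> J \<inter> R \<noteq> {}"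
proof
  assume "covers A0 S J"
  moreover obtain e where "e \<in> A0" "K e = R"
    using R_attained[OF assms(1)] .
  ultimately obtain i where "i \<in> J" "e \<in> S i \<times> S i" "i \<in> X - {x0}"
    using assms(2) unfolding covers_def by (meson subsetD)
  then have "i \<in> J \<inter> R"
    using \<open>K e = R\<close> unfolding K_def by blast
  then show "J \<inter> R \<noteq> {}"
    by blast
next
  assume "J \<inter> R \<noteq> {}"
  then obtain i where "i \<in> J" "\<And>e. e \<in> A0 \<Longrightarrow> i \<in> K e"
    unfolding R_def by blast
  then show "covers A0 S J"
    unfolding covers_def K_def by blast
qed

lemma covers_iff_meets_R:
  assumes "A0 \<noteq> {}" "J \<subseteq> X - {x0}"
  shows "covers A S J \<longleftrightarrow> covers A1 S J \<and> J \<inter> R \<noteq> {}"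
proof -
  have "A0 \<union> A1 = A"
    unfolding A0_def A1_def by blast
  then have "covers A S J \<longleftrightarrow> covers A0 S J \<and> covers A1 S J"
    using covers_Un[of A0 A1 S J] by simp
  then show ?thesis
    using covers_A0_iff[OF assms] by blast
qed

lemma covers_insert_x0: "covers A S (insert x0 J) \<longleftrightarrow> covers A1 S J"
  unfolding covers_def A1_def by auto

lemma insert_x0_covering_iff: "J \<subseteq> X \<Longrightarrow> insert x0 J \<in> covering A X S \<longleftrightarrow> covers A1 S J"
  using x0_in_X covers_insert_x0 unfolding covering_def by simp

lemma covering_reduced_iff:
  assumes "A0 \<noteq> {}" "J \<subseteq> X - {x0}"
  shows "J \<in> covering A1 X1 S \<longleftrightarrow> covers A1 S J \<and> \<not> covers A S J"
proof -
  have "J \<subseteq> X1 \<longleftrightarrow> J \<inter> R = {}"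
    using assms(2) unfolding X1_def by blast
  then show ?thesis
    using covers_iff_meets_R[OF assms] unfolding covering_def by blast
qed

lemma x0_in_critical:
  assumes "I \<in> cover_critical A X S"
  shows "x0 \<in> I"
proof (rule ccontr)
  assume "x0 \<notin> I"
  then obtain i where i: "i < x0" "i \<in> insert x0 I"
    using assms x0_in_X unfolding cover_critical_def by blast
  moreover have "I \<subseteq> X"
    using assms covering_subset unfolding cover_critical_def by blast
  ultimately have "i \<in> X"
    by auto
  then show False
    using x0_le i(1) by (simp add: not_le[symmetric])
qed

lemma no_critical_if_A0_empty:
  assumes "A0 = {}"
  shows "cover_critical A X S = {}"
proof (rule ccontr)
  assume "cover_critical A X S \<noteq> {}"
  then obtain I where I: "I \<in> cover_critical A X S"
    by blast
  then have IB: "I \<in> covering A X S"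
    unfolding cover_critical_def by blast
  have "covers A S (I - {x0})"
    unfolding covers_def
  proof
    fix e assume "e \<in> A"
    have "covers A S I"
      using IB unfolding covering_def by simp
    then obtain i where "i \<in> I" "e \<in> S i \<times> S i"
      using \<open>e \<in> A\<close> unfolding covers_def by meson
    moreover have "e \<notin> S x0 \<times> S x0"
      using assms \<open>e \<in> A\<close> unfolding A0_def by (metis IntI empty_iff)
    ultimately have "i \<in> I - {x0}"
      by auto
    with \<open>e \<in> S i \<times> S i\<close> show "\<exists>i\<in>I - {x0}. e \<in> S i \<times> S i" ..
  qed
  then have "I - {x0} \<in> covering A X S"
    using IB unfolding covering_def by auto
  then show False
    using I x0_in_critical[OF I] unfolding cover_critical_def by auto
qed

context
  assumes A0_nonempty: "A0 \<noteq> {}"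
begin

lemma smaller_removable_in_reduced:
  assumes I: "insert x0 J \<in> cover_critical A X S" and JB: "J \<in> covering A1 X1 S"
    and j: "j \<in> X1" "j \<notin> J"
  shows "\<exists>i<j. i \<in> insert j J \<and> insert j J - {i} \<in> covering A1 X1 S"
proof -
  have JX: "J \<subseteq> X - {x0}" and JR: "J \<inter> R = {}"
    using covering_subset[OF JB] X1_subset unfolding X1_def by blast+
  have jX: "j \<in> X" "j \<noteq> x0" "j \<notin> R"
    using j X1_subset unfolding X1_def by auto
  then obtain i where i: "i < j" "i \<in> insert j (insert x0 J)"
      "insert j (insert x0 J) - {i} \<in> covering A X S"
    using cover_criticalD(3)[OF I] j(2) by blast
  have "i \<noteq> x0"
  proof
    assume "i = x0"
    moreover have "insert j (insert x0 J) - {x0} = insert j J"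
      using JX jX by auto
    ultimately have "insert j J \<in> covering A X S"
      using i(3) by simp
    moreover have "insert j J \<subseteq> X - {x0}"
      using JX jX by blast
    ultimately show False
      using covers_iff_meets_R[OF A0_nonempty] JR jX unfolding covering_def by blast
  qed
  then have "insert j (insert x0 J) - {i} = insert x0 (insert j J - {i})"
    by auto
  then have "insert x0 (insert j J - {i}) \<in> covering A X S"
    using i(3) by simp
  moreover have "insert j J - {i} \<subseteq> X1"
    using covering_subset[OF JB] j by blast
  ultimately have "insert j J - {i} \<in> covering A1 X1 S"
    using insert_x0_covering_iff X1_subset unfolding covering_def by blast
  moreover have "i \<in> insert j J"
    using i(2) \<open>i \<noteq> x0\<close> by blast
  ultimately show ?thesis
    using i(1) by blast
qed

lemma critical_reduced_if_critical:
  assumes I: "insert x0 J \<in> cover_critical A X S" and x0: "x0 \<notin> J"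
  shows "J \<in> cover_critical A1 X1 S"
proof -
  have IB: "insert x0 J \<in> covering A X S"
    using cover_criticalD(1)[OF I] .
  have JX: "J \<subseteq> X - {x0}"
    using covering_subset[OF IB] x0 by blast
  have "insert x0 J - {x0} \<notin> covering A X S"
    using cover_criticalD(2)[OF I] by blast
  then have "\<not> covers A S J"
    using JX x0 unfolding covering_def by auto
  moreover have "covers A1 S J"
    using IB insert_x0_covering_iff JX by blast
  ultimately have JB: "J \<in> covering A1 X1 S"
    using covering_reduced_iff[OF A0_nonempty JX] by blast
  show ?thesis
  proof (rule cover_criticalI[OF JB])
    fix j assume "j \<in> J"
    then have "insert x0 J - {j} = insert x0 (J - {j})"
      using x0 by auto
    then have "insert x0 (J - {j}) \<notin> covering A X S"
      using cover_criticalD(2)[OF I, of j] \<open>j \<in> J\<close> by simp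
    then show "J - {j} \<notin> covering A1 X1 S"
      using insert_x0_covering_iff[of "J - {j}"] JX unfolding covering_def by auto
  qed (use smaller_removable_in_reduced[OF I JB] in blast)
qed

lemma smaller_removable_from_reduced:
  assumes J: "J \<in> cover_critical A1 X1 S" and j: "j \<in> X" "j \<notin> insert x0 J"
  shows "\<exists>i<j. i \<in> insert j (insert x0 J) \<and> insert j (insert x0 J) - {i} \<in> covering A X S"
proof (cases "j \<in> R")
  case True
  have JX: "J \<subseteq> X - {x0}" and "covers A1 S J"
    using cover_criticalD(1)[OF J] X1_subset unfolding covering_def by auto
  then have "covers A1 S (insert j J)" "insert j J \<subseteq> X - {x0}"
    using covers_mono[of A1 S J "insert j J"] j by auto
  then have "insert j J \<in> covering A X S"
    using covers_iff_meets_R[OF A0_nonempty] True unfolding covering_def by blast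
  moreover have "insert j (insert x0 J) - {x0} = insert j J"
    using j JX by auto
  moreover have "x0 < j"
    using x0_le[OF j(1)] j(2) by simp
  ultimately show ?thesis
    by auto
next
  case False
  then obtain i where i: "i < j" "i \<in> insert j J" "insert j J - {i} \<in> covering A1 X1 S"
    using cover_criticalD(3)[OF J] j unfolding X1_def by blast
  moreover have "x0 \<notin> J"
    using covering_subset[OF cover_criticalD(1)[OF J]] X1_subset by blast
  ultimately have "i \<noteq> x0"
    using j by auto
  then have "insert j (insert x0 J) - {i} = insert x0 (insert j J - {i})"
    by auto
  moreover have "covers A1 S (insert j J - {i})" "insert j J - {i} \<subseteq> X"
    using i(3) X1_subset unfolding covering_def by auto
  ultimately show ?thesis
    using i(1,2) insert_x0_covering_iff by auto
qed

lemma critical_if_critical_reduced: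
  assumes J: "J \<in> cover_critical A1 X1 S"
  shows "insert x0 J \<in> cover_critical A X S"
proof -
  have JX1: "J \<subseteq> X1"
    using covering_subset[OF cover_criticalD(1)[OF J]] .
  then have JX: "J \<subseteq> X - {x0}"
    using X1_subset by blast
  have cA1: "covers A1 S J" and ncA: "\<not> covers A S J"
    using covering_reduced_iff[OF A0_nonempty JX] cover_criticalD(1)[OF J] by auto
  show ?thesis
  proof (rule cover_criticalI)
    show "insert x0 J \<in> covering A X S"
      using insert_x0_covering_iff JX cA1 by blast
  next
    fix j assume "j \<in> insert x0 J"
    show "insert x0 J - {j} \<notin> covering A X S"
    proof (cases "j = x0")
      case True
      then have "insert x0 J - {j} = J"
        using JX by auto
      then show ?thesis
        using ncA unfolding covering_def by simp
    next
      case False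
      then have "J - {j} \<notin> covering A1 X1 S"
        using cover_criticalD(2)[OF J] \<open>j \<in> insert x0 J\<close> by blast
      then have "\<not> covers A1 S (J - {j})"
        using JX1 unfolding covering_def by auto
      moreover have "insert x0 J - {j} = insert x0 (J - {j})"
        using False by auto
      ultimately show ?thesis
        using insert_x0_covering_iff[of "J - {j}"] JX by auto
    qed
  qed (use smaller_removable_from_reduced[OF J] in blast)
qed

lemma critical_reduction: "cover_critical A X S = insert x0 ` cover_critical A1 X1 S"
proof (intro equalityI subsetI)
  fix I assume I: "I \<in> cover_critical A X S"
  then have "I = insert x0 (I - {x0})"
    using x0_in_critical by blast
  then show "I \<in> insert x0 ` cover_critical A1 X1 S"
    using critical_reduced_if_critical[of "I - {x0}"] I by (metis Diff_iff image_eqI singletonI)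
next
  fix I assume "I \<in> insert x0 ` cover_critical A1 X1 S"
  then show "I \<in> cover_critical A X S"
    using critical_if_critical_reduced by blast
qed

end

subsubsection \<open>The contracting homotopy\<close>

text \<open>In the notation of the paper, \<open>wedge_x0\<close> is \<open>v \<mapsto> S\<^sub>x\<^sub>0 \<and> v\<close> (zero when the result is
  decomposable), and \<open>essential\<close> consists of the basis elements \<open>S\<^sub>x\<^sub>0 \<and> v\<close> with \<open>v\<close>
  decomposable.\<close>

definition wedge_x0 :: "(nat set \<Rightarrow> 'k::field) \<Rightarrow> nat set \<Rightarrow> 'k" where
  "wedge_x0 f I = (if x0 \<in> I \<and> I - {x0} \<in> covering A X S then f (I - {x0}) else 0)"

definition essential :: "nat set set" where
  "essential = {I \<in> covering A X S. x0 \<in> I \<and> I - {x0} \<notin> covering A X S}"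

lemma insert_x0_covering: "J \<in> covering A X S \<Longrightarrow> insert x0 J \<in> covering A X S"
  using covering_mono covering_subset x0_in_X by (metis insert_subset subset_insertI)

lemma wedge_x0_not_covering: "I \<notin> covering A X S \<Longrightarrow> wedge_x0 f I = 0"
  unfolding wedge_x0_def using insert_x0_covering by (metis insert_Diff)

lemma wedge_x0_in_chains: "wedge_x0 f \<in> cover_chains A X S"
  unfolding cover_chains_def using wedge_x0_not_covering by blast

lemma wedge_x0_off_essential: "(\<And>I. I \<notin> essential \<Longrightarrow> u I = 0) \<Longrightarrow> wedge_x0 u I = 0"
  unfolding wedge_x0_def essential_def by auto

lemma no_essential_if_A0_empty:
  assumes "A0 = {}"
  shows "I \<notin> essential"
proof
  assume I: "I \<in> essential"
  then have IB: "I \<in> covering A X S"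
    unfolding essential_def by blast
  have "covers A S (I - {x0})"
    unfolding covers_def
  proof
    fix e assume "e \<in> A"
    have "covers A S I"
      using IB unfolding covering_def by simp
    then obtain i where "i \<in> I" "e \<in> S i \<times> S i"
      using \<open>e \<in> A\<close> unfolding covers_def by meson
    moreover have "e \<notin> S x0 \<times> S x0"
      using assms \<open>e \<in> A\<close> unfolding A0_def by (metis IntI empty_iff)
    ultimately have "i \<in> I - {x0}"
      by auto
    with \<open>e \<in> S i \<times> S i\<close> show "\<exists>i\<in>I - {x0}. e \<in> S i \<times> S i" ..
  qed
  then have "I - {x0} \<in> covering A X S"
    using IB unfolding covering_def by auto
  then show False
    using I unfolding essential_def by blast
qed

lemma diff_wedge_x0_without_x0:
  fixes f :: "nat set \<Rightarrow> 'k::field"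
  assumes I: "I \<in> covering A X S" and "x0 \<notin> I"
  shows "cover_diff A X S (wedge_x0 f) I = f I"
proof -
  have "x0 \<in> X - I"
    using x0_in_X \<open>x0 \<notin> I\<close> by simp
  then have "cover_diff A X S (wedge_x0 f) I = wsign (insert x0 I) x0 * wedge_x0 f (insert x0 I)
      + (\<Sum>i\<in>X - I - {x0}. wsign (insert i I) i * wedge_x0 f (insert i I))"
    unfolding cover_diff_covering[OF I] using finite_X by (simp add: sum.remove)
  also have "(\<Sum>i\<in>X - I - {x0}. wsign (insert i I) i * wedge_x0 f (insert i I)) = 0"
    using \<open>x0 \<notin> I\<close> by (intro sum.neutral) (auto simp: wedge_x0_def)
  also have "wsign (insert x0 I) x0 = (1::'k)"
    using covering_subset[OF I] x0_le by (intro wsign_insert_least) auto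
  also have "wedge_x0 f (insert x0 I) = f I"
    unfolding wedge_x0_def using I \<open>x0 \<notin> I\<close> by simp
  finally show ?thesis
    by simp
qed

lemma homotopy_insert_x0:
  fixes f :: "nat set \<Rightarrow> 'k::field"
  assumes J: "J \<in> covering A X S" and x0: "x0 \<notin> J"
  shows "cover_diff A X S (wedge_x0 f) (insert x0 J) + wedge_x0 (cover_diff A X S f) (insert x0 J)
    = f (insert x0 J)"
proof -
  let ?I = "insert x0 J"
  have fin: "finite J"
    using covering_subset[OF J] finite_X finite_subset by blast
  have XJ: "X - J = insert x0 (X - ?I)"
    using x0_in_X x0 by auto
  have "wedge_x0 (cover_diff A X S f) ?I = cover_diff A X S f J"
    unfolding wedge_x0_def using J x0 by simp
  also have "\<dots> = (\<Sum>i\<in>insert x0 (X - ?I). wsign (insert i J) i * f (insert i J))"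
    unfolding cover_diff_covering[OF J] XJ ..
  also have "\<dots> = wsign ?I x0 * f ?I + (\<Sum>i\<in>X - ?I. wsign (insert i J) i * f (insert i J))"
    using finite_X by (simp add: sum.insert)
  also have "wsign ?I x0 = (1::'k)"
    using covering_subset[OF J] x0_le by (intro wsign_insert_least) auto
  finally have wedge_diff: "wedge_x0 (cover_diff A X S f) ?I
      = f ?I + (\<Sum>i\<in>X - ?I. wsign (insert i J) i * f (insert i J))"
    by simp
  have "cover_diff A X S (wedge_x0 f) ?I = (\<Sum>i\<in>X - ?I. wsign (insert i ?I) i * wedge_x0 f (insert i ?I))"
    by (rule cover_diff_covering[OF insert_x0_covering[OF J]])
  also have "\<dots> = (\<Sum>i\<in>X - ?I. - (wsign (insert i J) i * f (insert i J)))"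
  proof (rule sum.cong[OF refl])
    fix i assume i: "i \<in> X - ?I"
    then have "x0 < i"
      using x0_le by force
    moreover have "insert i J \<in> covering A X S"
      using covering_mono[OF J] covering_subset[OF J] i by blast
    moreover have "insert i ?I - {x0} = insert i J"
      using x0 i by auto
    moreover have "wsign (insert i ?I) i = - (wsign (insert i J) i :: 'k)"
      using wsign_insert_smaller[OF fin \<open>x0 < i\<close> x0] .
    ultimately show "wsign (insert i ?I) i * wedge_x0 f (insert i ?I) = - (wsign (insert i J) i * f (insert i J))"
      unfolding wedge_x0_def by simp
  qed
  finally show ?thesis
    unfolding wedge_diff by (simp add: sum_negf)
qed

lemma homotopy_formula:
  fixes f :: "nat set \<Rightarrow> 'k::field"
  assumes f: "f \<in> cover_chains A X S" and I: "I \<notin> essential"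
  shows "f I = cover_diff A X S (wedge_x0 f) I + wedge_x0 (cover_diff A X S f) I"
proof (cases "I \<in> covering A X S")
  case False
  then show ?thesis
    using f by (simp add: cover_chains_def cover_diff_not_covering wedge_x0_not_covering)
next
  case True
  show ?thesis
  proof (cases "x0 \<in> I")
    case False
    then have "wedge_x0 (cover_diff A X S f) I = 0"
      unfolding wedge_x0_def by simp
    then show ?thesis
      using diff_wedge_x0_without_x0[OF True False, of f] by simp
  next
    case x0: True
    then have "I - {x0} \<in> covering A X S"
      using True I unfolding essential_def by blast
    then show ?thesis
      using homotopy_insert_x0[of "I - {x0}" f] x0 by (simp add: insert_absorb)
  qed
qed

lemma homotopy_remainder_off_essential:
  fixes y :: "nat set \<Rightarrow> 'k::field"
  assumes "y \<in> cover_chains A X S" "\<And>I. I \<notin> essential \<Longrightarrow> cover_diff A X S y I = 0"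
    and "I \<notin> essential"
  shows "y I - cover_diff A X S (wedge_x0 y) I = 0"
  using homotopy_formula[OF assms(1,3)] wedge_x0_off_essential[of "cover_diff A X S y", OF assms(2)]
  by simp

lemma acyclic_if_A0_empty:
  assumes "A0 = {}"
  shows "cover_cycles A X S \<subseteq> (cover_boundaries A X S :: (nat set \<Rightarrow> 'k::field) set)"
proof
  fix f :: "nat set \<Rightarrow> 'k" assume "f \<in> cover_cycles A X S"
  then have f: "f \<in> cover_chains A X S" "\<And>I. cover_diff A X S f I = 0"
    unfolding cover_cycles_def by auto
  have "f I - cover_diff A X S (wedge_x0 f) I = 0" for I
    using homotopy_remainder_off_essential[OF f] no_essential_if_A0_empty[OF assms] by blast
  then have "f = cover_diff A X S (wedge_x0 f)"
    by (simp add: fun_eq_iff)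
  then show "f \<in> cover_boundaries A X S"
    using cover_diff_in_boundaries[OF wedge_x0_in_chains] by metis
qed

subsubsection \<open>The reduced complex\<close>

text \<open>On the chains of the complex of \<open>A1\<close> on \<open>X1\<close>, \<open>lift\<close> is an isomorphism onto the chains
  supported on \<open>essential\<close>.\<close>

definition lift :: "(nat set \<Rightarrow> 'k::field) \<Rightarrow> nat set \<Rightarrow> 'k" where
  "lift g I = (if x0 \<in> I then g (I - {x0}) else 0)"

definition unlift :: "(nat set \<Rightarrow> 'k::field) \<Rightarrow> nat set \<Rightarrow> 'k" where
  "unlift f J = (if x0 \<notin> J then f (insert x0 J) else 0)"

context
  assumes A0_nonempty: "A0 \<noteq> {}"
begin

lemma insert_x0_essential_iff:
  assumes x0: "x0 \<notin> J"
  shows "insert x0 J \<in> essential \<longleftrightarrow> J \<in> covering A1 X1 S"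
proof
  assume "insert x0 J \<in> essential"
  then have I: "insert x0 J \<in> covering A X S" and "J \<notin> covering A X S"
    unfolding essential_def using x0 by auto
  moreover have JX: "J \<subseteq> X - {x0}"
    using covering_subset[OF I] x0 by blast
  ultimately have "covers A1 S J" "\<not> covers A S J"
    using insert_x0_covering_iff unfolding covering_def by auto
  then show "J \<in> covering A1 X1 S"
    using covering_reduced_iff[OF A0_nonempty JX] by blast
next
  assume J: "J \<in> covering A1 X1 S"
  then have JX: "J \<subseteq> X - {x0}"
    using covering_subset X1_subset by blast
  then have "covers A1 S J" "\<not> covers A S J"
    using covering_reduced_iff[OF A0_nonempty JX] J by auto
  then have "insert x0 J \<in> covering A X S" "J \<notin> covering A X S"
    using insert_x0_covering_iff[of J] JX unfolding covering_def by auto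
  then show "insert x0 J \<in> essential"
    unfolding essential_def using x0 by simp
qed

lemma lift_off_essential:
  assumes "g \<in> cover_chains A1 X1 S" "I \<notin> essential"
  shows "lift g I = 0"
proof (cases "x0 \<in> I")
  case True
  then have "I - {x0} \<notin> covering A1 X1 S"
    using insert_x0_essential_iff[of "I - {x0}"] assms(2) by (simp add: insert_absorb)
  then show ?thesis
    using assms(1) True unfolding lift_def cover_chains_def by simp
qed (simp add: lift_def)

lemma lift_in_chains: "g \<in> cover_chains A1 X1 S \<Longrightarrow> lift g \<in> cover_chains A X S"
  using lift_off_essential unfolding cover_chains_def essential_def by blast

lemma unlift_in_chains:
  assumes "\<And>I. I \<notin> essential \<Longrightarrow> u I = 0"
  shows "unlift u \<in> cover_chains A1 X1 S"
  unfolding cover_chains_def unlift_def using assms insert_x0_essential_iff by auto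

lemma lift_unlift:
  assumes "\<And>I. I \<notin> essential \<Longrightarrow> u I = 0"
  shows "lift (unlift u) = u"
proof
  fix I
  show "lift (unlift u) I = u I"
  proof (cases "x0 \<in> I")
    case True
    then show ?thesis
      unfolding lift_def unlift_def by (simp add: insert_absorb)
  next
    case False
    then have "I \<notin> essential"
      unfolding essential_def by blast
    then show ?thesis
      using assms False unfolding lift_def by simp
  qed
qed

lemma lift_eq_0D:
  assumes "g \<in> cover_chains A1 X1 S" "lift g = (\<lambda>_. 0)"
  shows "g = (\<lambda>_. 0)"
proof
  fix J
  show "g J = 0"
  proof (cases "J \<in> covering A1 X1 S")
    case True
    then have "x0 \<notin> J"
      using covering_subset X1_subset by blast
    then show ?thesis
      using fun_cong[OF assms(2), of "insert x0 J"] unfolding lift_def by simp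
  next
    case False
    then show ?thesis
      using assms(1) unfolding cover_chains_def by simp
  qed
qed

lemma diff_lift_without_x0:
  fixes g :: "nat set \<Rightarrow> 'k::field"
  assumes g: "g \<in> cover_chains A1 X1 S" and x0: "x0 \<notin> I"
  shows "cover_diff A X S (lift g) I = 0"
proof (cases "I \<in> covering A X S")
  case True
  have "I \<notin> covering A1 X1 S"
  proof
    assume I: "I \<in> covering A1 X1 S"
    then have "I \<subseteq> X - {x0}"
      using covering_subset X1_subset by blast
    then show False
      using covering_reduced_iff[OF A0_nonempty] I True unfolding covering_def by blast
  qed
  then have "g I = 0"
    using g unfolding cover_chains_def by blast
  then have "lift g (insert i I) = 0" for i
    using x0 unfolding lift_def by (auto simp: insert_Diff_if)
  then show ?thesis
    unfolding cover_diff_covering[OF True] by simp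
qed (simp add: cover_diff_not_covering)

lemma sum_insert_x0_eq_neg_reduced_diff:
  fixes g :: "nat set \<Rightarrow> 'k::field"
  assumes g: "g \<in> cover_chains A1 X1 S" and J: "J \<in> covering A1 X1 S"
  shows "(\<Sum>i\<in>X - insert x0 J. wsign (insert i (insert x0 J)) i * g (insert i J))
    = - cover_diff A1 X1 S g J"
proof -
  let ?I = "insert x0 J"
  have JX: "J \<subseteq> X - {x0}" "finite J"
    using covering_subset[OF J] X1_subset finite_X1 finite_subset by blast+
  have "(\<Sum>i\<in>X - ?I. wsign (insert i ?I) i * g (insert i J))
      = (\<Sum>i\<in>X1 - J. wsign (insert i ?I) i * g (insert i J))"
  proof (rule sum.mono_neutral_right)
    show "finite (X - ?I)" "X1 - J \<subseteq> X - ?I"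
      using finite_X X1_subset by auto
    show "\<forall>i\<in>X - ?I - (X1 - J). wsign (insert i ?I) i * g (insert i J) = 0"
    proof
      fix i assume "i \<in> X - ?I - (X1 - J)"
      then have "insert i J \<notin> covering A1 X1 S"
        using covering_subset by blast
      then show "wsign (insert i ?I) i * g (insert i J) = 0"
        using g unfolding cover_chains_def by simp
    qed
  qed
  also have "\<dots> = (\<Sum>i\<in>X1 - J. - (wsign (insert i J) i * g (insert i J)))"
  proof (rule sum.cong[OF refl])
    fix i assume "i \<in> X1 - J"
    then have "x0 < i"
      using X1_subset x0_le by force
    then have "wsign (insert i ?I) i = - (wsign (insert i J) i :: 'k)"
      using wsign_insert_smaller JX by blast
    then show "wsign (insert i ?I) i * g (insert i J) = - (wsign (insert i J) i * g (insert i J))"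
      by simp
  qed
  finally show ?thesis
    unfolding cover_diff_covering[OF J] by (simp add: sum_negf)
qed

lemma diff_lift_insert_x0:
  fixes g :: "nat set \<Rightarrow> 'k::field"
  assumes g: "g \<in> cover_chains A1 X1 S" and x0: "x0 \<notin> J"
  shows "cover_diff A X S (lift g) (insert x0 J) = - cover_diff A1 X1 S g J"
proof (cases "insert x0 J \<in> covering A X S")
  case False
  then have "J \<notin> covering A1 X1 S"
    using insert_x0_essential_iff[OF x0] unfolding essential_def by blast
  then show ?thesis
    using False by (simp add: cover_diff_not_covering)
next
  case True
  let ?I = "insert x0 J"
  have "cover_diff A X S (lift g) ?I = (\<Sum>i\<in>X - ?I. wsign (insert i ?I) i * g (insert i J))"
    unfolding cover_diff_covering[OF True]
  proof (rule sum.cong[OF refl])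
    fix i assume "i \<in> X - ?I"
    then have "insert i ?I - {x0} = insert i J"
      using x0 by auto
    then show "wsign (insert i ?I) i * lift g (insert i ?I) = wsign (insert i ?I) i * g (insert i J)"
      unfolding lift_def by simp
  qed
  also have "\<dots> = - cover_diff A1 X1 S g J"
  proof (cases "J \<in> covering A1 X1 S")
    case False
    have "covers A1 S J"
      using True insert_x0_covering_iff covering_subset[OF True] by blast
    then have "\<not> J \<subseteq> X1"
      using False unfolding covering_def by blast
    then have "insert i J \<notin> covering A1 X1 S" for i
      using covering_subset by blast
    then have "g (insert i J) = 0" for i
      using g unfolding cover_chains_def by simp
    then show ?thesis
      using False by (simp add: cover_diff_not_covering)
  qed (rule sum_insert_x0_eq_neg_reduced_diff[OF g])
  finally show ?thesis .
qed

lemma diff_lift: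
  fixes g :: "nat set \<Rightarrow> 'k::field"
  assumes "g \<in> cover_chains A1 X1 S"
  shows "cover_diff A X S (lift g) = (\<lambda>I. - lift (cover_diff A1 X1 S g) I)"
proof
  fix I
  show "cover_diff A X S (lift g) I = - lift (cover_diff A1 X1 S g) I"
  proof (cases "x0 \<in> I")
    case True
    then show ?thesis
      using diff_lift_insert_x0[OF assms, of "I - {x0}"] unfolding lift_def by (simp add: insert_absorb)
  next
    case False
    then show ?thesis
      using diff_lift_without_x0[OF assms False] unfolding lift_def by simp
  qed
qed

lemma lift_in_cycles:
  assumes "z \<in> cover_cycles A1 X1 S"
  shows "lift z \<in> cover_cycles A X S"
proof -
  have z: "z \<in> cover_chains A1 X1 S" "cover_diff A1 X1 S z = (\<lambda>_. 0)"
    using assms unfolding cover_cycles_def by auto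
  then have "cover_diff A X S (lift z) = (\<lambda>_. 0)"
    using diff_lift[OF z(1)] by (simp add: lift_def)
  then show ?thesis
    using lift_in_chains[OF z(1)] unfolding cover_cycles_def by simp
qed

lemma lift_in_boundaries:
  fixes w :: "nat set \<Rightarrow> 'k::field"
  assumes "w \<in> cover_boundaries A1 X1 S"
  shows "lift w \<in> cover_boundaries A X S"
proof -
  obtain y where y: "y \<in> cover_chains A1 X1 S" "w = cover_diff A1 X1 S y"
    using assms unfolding cover_boundaries_def by blast
  then have "lift w = (\<lambda>I. (- 1) * cover_diff A X S (lift y) I)"
    using diff_lift[OF y(1)] by simp
  then show ?thesis
    using cover_boundaries_scale[OF cover_diff_in_boundaries[OF lift_in_chains[OF y(1)]]] by metis
qed

lemma cycle_decomposition:
  fixes f :: "nat set \<Rightarrow> 'k::field"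
  assumes "f \<in> cover_cycles A X S"
  shows "\<exists>b\<in>cover_boundaries A X S. \<exists>v\<in>cover_cycles A1 X1 S. f = (\<lambda>I. b I + lift v I)"
proof -
  have f: "f \<in> cover_chains A X S" "\<And>I. cover_diff A X S f I = 0"
    using assms unfolding cover_cycles_def by auto
  define u where "u I = f I - cover_diff A X S (wedge_x0 f) I" for I
  have u: "\<And>I. I \<notin> essential \<Longrightarrow> u I = 0"
    unfolding u_def using homotopy_remainder_off_essential[OF f] by blast
  have du: "cover_diff A X S u = (\<lambda>_. 0)"
    unfolding u_def by (simp add: fun_eq_iff cover_diff_diff cover_diff_cover_diff finite_X f(2))
  define v where "v = unlift u"
  have v: "v \<in> cover_chains A1 X1 S" "lift v = u"
    unfolding v_def using unlift_in_chains[OF u] lift_unlift[OF u] by auto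
  have "lift (cover_diff A1 X1 S v) = (\<lambda>_. 0)"
    using diff_lift[OF v(1)] du v(2) by (simp add: fun_eq_iff)
  then have "v \<in> cover_cycles A1 X1 S"
    using lift_eq_0D[OF cover_diff_in_chains] v(1) unfolding cover_cycles_def by blast
  moreover have "f = (\<lambda>I. cover_diff A X S (wedge_x0 f) I + lift v I)"
    using v(2) unfolding u_def by simp
  ultimately show ?thesis
    using cover_diff_in_boundaries[OF wedge_x0_in_chains] by blast
qed

lemma reduced_boundary_if_lift_boundary:
  fixes z :: "nat set \<Rightarrow> 'k::field"
  assumes z: "z \<in> cover_chains A1 X1 S" and "lift z \<in> cover_boundaries A X S"
  shows "z \<in> cover_boundaries A1 X1 S"
proof -
  obtain y where y: "y \<in> cover_chains A X S" "lift z = cover_diff A X S y"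
    using assms(2) unfolding cover_boundaries_def by blast
  have dy: "cover_diff A X S y I = 0" if "I \<notin> essential" for I
    using lift_off_essential[OF z that] y(2) by metis
  define g where "g I = y I - cover_diff A X S (wedge_x0 y) I" for I
  have g: "\<And>I. I \<notin> essential \<Longrightarrow> g I = 0"
    unfolding g_def using homotopy_remainder_off_essential[OF y(1) dy] by blast
  have dg: "cover_diff A X S g = lift z"
    unfolding g_def y(2) by (simp add: fun_eq_iff cover_diff_diff cover_diff_cover_diff finite_X)
  define h where "h = unlift g"
  have h: "h \<in> cover_chains A1 X1 S" "lift h = g"
    unfolding h_def using unlift_in_chains[OF g] lift_unlift[OF g] by auto
  have "lift z = (\<lambda>I. - lift (cover_diff A1 X1 S h) I)"
    using diff_lift[OF h(1)] h(2) dg by simp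
  then have "lift (\<lambda>J. z J + cover_diff A1 X1 S h J) = (\<lambda>_. 0)"
    unfolding lift_def by (auto simp: fun_eq_iff dest!: fun_cong split: if_splits)
  moreover have "(\<lambda>J. z J + cover_diff A1 X1 S h J) \<in> cover_chains A1 X1 S"
    using z cover_diff_in_chains[of A1 X1 S h] unfolding cover_chains_def by simp
  ultimately have "z = (\<lambda>J. (- 1) * cover_diff A1 X1 S h J)"
    using lift_eq_0D by (simp add: fun_eq_iff eq_neg_iff_add_eq_0)
  then show ?thesis
    using cover_boundaries_scale[OF cover_diff_in_boundaries[OF h(1)]] by metis
qed

lemma acyclic_if_reduced_acyclic:
  assumes "(cover_cycles A1 X1 S :: (nat set \<Rightarrow> 'k::field) set) \<subseteq> cover_boundaries A1 X1 S"
  shows "(cover_cycles A X S :: (nat set \<Rightarrow> 'k) set) \<subseteq> cover_boundaries A X S"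
proof
  fix f :: "nat set \<Rightarrow> 'k" assume "f \<in> cover_cycles A X S"
  then show "f \<in> cover_boundaries A X S"
    using cycle_decomposition assms lift_in_boundaries cover_boundaries_add by blast
qed

lemma generates_homology_lift:
  assumes z: "generates_homology A1 X1 S (z :: nat set \<Rightarrow> 'k::field)"
  shows "generates_homology A X S (lift z)"
proof -
  have "\<exists>w\<in>cover_boundaries A X S. \<exists>c. f = (\<lambda>I. w I + c * lift z I)"
    if f: "f \<in> cover_cycles A X S" for f :: "nat set \<Rightarrow> 'k"
  proof -
    obtain b v where bv: "b \<in> cover_boundaries A X S" "v \<in> cover_cycles A1 X1 S"
        "f = (\<lambda>I. b I + lift v I)"
      using cycle_decomposition[OF f] by blast
    then obtain w c where wc: "w \<in> cover_boundaries A1 X1 S" "v = (\<lambda>I. w I + c * z I)"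
      using z unfolding generates_homology_def by blast
    then have "f = (\<lambda>I. (b I + lift w I) + c * lift z I)"
      using bv(3) by (simp add: fun_eq_iff lift_def)
    moreover have "(\<lambda>I. b I + lift w I) \<in> cover_boundaries A X S"
      using cover_boundaries_add[OF bv(1) lift_in_boundaries[OF wc(1)]] .
    ultimately show ?thesis
      by (intro bexI[where x="\<lambda>I. b I + lift w I"] exI[where x=c])
  qed
  moreover have "lift z \<in> cover_cycles A X S" "lift z \<notin> cover_boundaries A X S"
    using z lift_in_cycles reduced_boundary_if_lift_boundary
    unfolding generates_homology_def cover_cycles_def by auto
  ultimately show ?thesis
    unfolding generates_homology_def by blast
qed

lemma critical_homology_reduction:
  assumes "critical_homology A1 X1 S TYPE('k::field)"
  shows "critical_homology A X S TYPE('k)"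
  using assms acyclic_if_reduced_acyclic generates_homology_lift critical_reduction[OF A0_nonempty]
  unfolding critical_homology_def by (metis image_empty image_insert)

end

end

lemma critical_homology_if_anick:
  assumes "finite X" "anick_family X S"
  shows "critical_homology A X S TYPE('k::field)"
  using assms
proof (induction "card X" arbitrary: X A rule: less_induct)
  case less
  show ?case
  proof (cases "X = {}")
    case True
    then show ?thesis
      using critical_homology_no_indices by simp
  next
    case False
    interpret anick_reduction A X S
      using less.prems False by unfold_locales
    show ?thesis
    proof (cases "A0 = {}")
      case True
      then show ?thesis
        unfolding critical_homology_def using no_critical_if_A0_empty acyclic_if_A0_empty by blast
    next
      case False
      have "card X1 < card X"
        using X1_subset x0_in_X less.prems(1) by (meson card_Diff1_less card_mono finite_Diff le_less_trans)
      moreover have "anick_family X1 S"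
        using anick_family_subset[OF less.prems(2)] X1_subset by blast
      ultimately have "critical_homology A1 X1 S TYPE('k)"
        using less.hyps finite_X1 by blast
      then show ?thesis
        using critical_homology_reduction[OF False] by blast
    qed
  qed
qed

lemma (in vector_space) dim_add_line:
  assumes W: "subspace W" "W \<subseteq> span F" "finite F" and z: "z \<notin> W"
  shows "dim {w + c *s z | w c. w \<in> W} = dim W + 1"
proof -
  have span_W: "span W = W"
    using W(1) by simp
  have "{w + c *s z | w c. w \<in> W} = span (insert z W)"
    unfolding span_insert span_W
  proof (intro equalityI subsetI)
    fix x assume "x \<in> {w + c *s z | w c. w \<in> W}"
    then obtain w c where "x = w + c *s z" "w \<in> W"
      by blast
    then show "x \<in> {x. \<exists>k. x - k *s z \<in> W}"
      by (auto intro!: exI[where x=c])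
  next
    fix x assume "x \<in> {x. \<exists>k. x - k *s z \<in> W}"
    then obtain k where "x - k *s z \<in> W"
      by blast
    moreover have "x = (x - k *s z) + k *s z"
      by simp
    ultimately show "x \<in> {w + c *s z | w c. w \<in> W}"
      by blast
  qed
  then have "dim {w + c *s z | w c. w \<in> W} = dim (insert z W)"
    by simp
  obtain B where B: "B \<subseteq> W" "independent B" "W \<subseteq> span B" "card B = dim W"
    using basis_exists by blast
  have "finite B"
    using independent_span_bound[OF W(3) B(2)] B(1) W(2) by auto
  have span_B: "span B = W"
    using span_mono[OF B(1)] span_W B(3) by blast
  then have "z \<notin> span B"
    using z by simp
  then have "independent (insert z B)" "z \<notin> B"
    using independent_insertI[OF _ B(2)] span_base by blast+
  moreover have "span (insert z B) = span (insert z W)"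
    unfolding span_insert span_B span_W ..
  ultimately have "dim (insert z W) = card B + 1"
    using dim_eq_card \<open>finite B\<close> by simp
  then show ?thesis
    using \<open>dim {w + c *s z | w c. w \<in> W} = dim (insert z W)\<close> B(4) by simp
qed

lemma vector_space_fscale: "vector_space (fscale :: 'k::field \<Rightarrow> (nat set \<Rightarrow> 'k) \<Rightarrow> _)"
  unfolding vector_space_def fscale_def by (auto simp: fun_eq_iff algebra_simps)

lemma sum_fun_apply: "finite B \<Longrightarrow> (\<Sum>i\<in>B. g i) x = (\<Sum>i\<in>B. (g i x :: 'a::comm_monoid_add))"
  by (induct B rule: finite_induct) auto

definition unit_chain :: "nat set \<Rightarrow> nat set \<Rightarrow> 'k::field" where
  "unit_chain I J = (if J = I then 1 else 0)"

lemma cover_chains_subset_span: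
  assumes "finite X"
  shows "(cover_chains A X S :: (nat set \<Rightarrow> 'k::field) set)
     \<subseteq> module.span fscale (unit_chain ` covering A X S)"
proof
  interpret v: vector_space "fscale :: 'k \<Rightarrow> (nat set \<Rightarrow> 'k) \<Rightarrow> _"
    by (rule vector_space_fscale)
  have fin: "finite (covering A X S)"
    using finite_covering[OF assms] .
  fix f :: "nat set \<Rightarrow> 'k" assume f: "f \<in> cover_chains A X S"
  have "(\<Sum>I\<in>covering A X S. fscale (f I) (unit_chain I)) J = f J" for J
  proof -
    have "(\<Sum>I\<in>covering A X S. fscale (f I) (unit_chain I)) J
        = (\<Sum>I\<in>covering A X S. f I * unit_chain I J)"
      by (simp add: sum_fun_apply[OF fin] fscale_def)
    also have "\<dots> = f J"
    proof (cases "J \<in> covering A X S")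
      case True
      then show ?thesis
        unfolding unit_chain_def using fin by (simp add: if_distrib cong: if_cong)
    next
      case False
      then have "(\<Sum>I\<in>covering A X S. f I * unit_chain I J) = 0"
        unfolding unit_chain_def by (intro sum.neutral) auto
      then show ?thesis
        using f False unfolding cover_chains_def by simp
    qed
    finally show ?thesis .
  qed
  then have "f = (\<Sum>I\<in>covering A X S. fscale (f I) (unit_chain I))"
    by (simp add: fun_eq_iff)
  also have "\<dots> \<in> v.span (unit_chain ` covering A X S)"
    by (intro v.span_sum v.span_scale v.span_base) auto
  finally show "f \<in> v.span (unit_chain ` covering A X S)" .
qed

lemma cover_boundaries_subspace:
  "module.subspace fscale (cover_boundaries A X S :: (nat set \<Rightarrow> 'k::field) set)"
proof -
  interpret v: vector_space "fscale :: 'k \<Rightarrow> (nat set \<Rightarrow> 'k) \<Rightarrow> _"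
    by (rule vector_space_fscale)
  show ?thesis
    unfolding v.subspace_def fscale_def plus_fun_def zero_fun_def
    using zero_in_cover_boundaries cover_boundaries_add cover_boundaries_scale by blast
qed

lemma cover_cycles_eq_line:
  fixes z :: "nat set \<Rightarrow> 'k::field"
  assumes "finite X" "generates_homology A X S z"
  shows "cover_cycles A X S = {w + fscale c z | w c. w \<in> cover_boundaries A X S}"
proof (intro equalityI subsetI)
  fix f :: "nat set \<Rightarrow> 'k" assume "f \<in> cover_cycles A X S"
  then obtain w c where "w \<in> cover_boundaries A X S" "f = (\<lambda>I. w I + c * z I)"
    using assms(2) unfolding generates_homology_def by blast
  then show "f \<in> {w + fscale c z | w c. w \<in> cover_boundaries A X S}"
    by (auto simp: fun_eq_iff fscale_def)
next
  fix f :: "nat set \<Rightarrow> 'k" assume "f \<in> {w + fscale c z | w c. w \<in> cover_boundaries A X S}"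
  then obtain w c where f: "f = w + fscale c z" and "w \<in> cover_boundaries A X S"
    by blast
  then have w: "w \<in> cover_chains A X S" "cover_diff A X S w = (\<lambda>_. 0)"
    using cover_boundaries_subset_cycles[OF assms(1)] unfolding cover_cycles_def by auto
  have z: "z \<in> cover_chains A X S" "cover_diff A X S z = (\<lambda>_. 0)"
    using assms(2) unfolding generates_homology_def cover_cycles_def by auto
  have "f = (\<lambda>I. w I + c * z I)"
    unfolding f by (simp add: fun_eq_iff fscale_def)
  moreover have "cover_diff A X S (\<lambda>I. w I + c * z I) = (\<lambda>_. 0)"
    by (simp add: fun_eq_iff cover_diff_add cover_diff_scale w z)
  moreover have "(\<lambda>I. w I + c * z I) \<in> cover_chains A X S"
    using w z unfolding cover_chains_def by auto
  ultimately show "f \<in> cover_cycles A X S"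
    unfolding cover_cycles_def by simp
qed

lemma dim_cover_homology:
  assumes "finite X" "anick_family X S"
  shows "vector_space.dim (fscale :: 'k::field \<Rightarrow> _) (cover_cycles A X S :: (nat set \<Rightarrow> 'k) set)
      - vector_space.dim (fscale :: 'k \<Rightarrow> _) (cover_boundaries A X S :: (nat set \<Rightarrow> 'k) set)
    = card (cover_critical A X S)"
proof -
  interpret v: vector_space "fscale :: 'k \<Rightarrow> (nat set \<Rightarrow> 'k) \<Rightarrow> _"
    by (rule vector_space_fscale)
  consider
      (acyclic) "cover_critical A X S = {}"
        "(cover_cycles A X S :: (nat set \<Rightarrow> 'k) set) \<subseteq> cover_boundaries A X S"
    | (generated) I and z :: "nat set \<Rightarrow> 'k"
        where "cover_critical A X S = {I}" "generates_homology A X S z"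
    using critical_homology_if_anick[OF assms, of A, where 'k='k]
    unfolding critical_homology_def by blast
  then show ?thesis
  proof cases
    case acyclic
    then have "cover_cycles A X S = (cover_boundaries A X S :: (nat set \<Rightarrow> 'k) set)"
      using cover_boundaries_subset_cycles[OF assms(1)] by blast
    then show ?thesis
      using acyclic(1) by simp
  next
    case generated
    have "z \<notin> cover_boundaries A X S"
      using generated(2) unfolding generates_homology_def by blast
    moreover have "cover_boundaries A X S \<subseteq> v.span (unit_chain ` covering A X S)"
      using cover_chains_subset_span[OF assms(1)] cover_diff_in_chains
      unfolding cover_boundaries_def by blast
    moreover have "finite (unit_chain ` covering A X S :: (nat set \<Rightarrow> 'k) set)"
      using finite_covering[OF assms(1)] by blast
    ultimately have "v.dim {w + fscale c z | w c. w \<in> cover_boundaries A X S}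
        = v.dim (cover_boundaries A X S) + 1"
      using v.dim_add_line[OF cover_boundaries_subspace] by blast
    then show ?thesis
      using generated(1) cover_cycles_eq_line[OF assms(1) generated(2)] by simp
  qed
qed

subsection \<open>The complex of a tree monomial\<close>

lemma ab_basis_eq_covering: "ab_basis T Ss = covering (internal_edges T) {0..<length Ss} ((!) Ss)"
  unfolding ab_basis_def indecomposable_def covering_def covers_def by auto

lemma chains_eq_cover_chains: "chains T Ss = cover_chains (internal_edges T) {0..<length Ss} ((!) Ss)"
  unfolding chains_def cover_chains_def ab_basis_eq_covering ..

lemma ab_diff_eq_cover_diff: "ab_diff T Ss = cover_diff (internal_edges T) {0..<length Ss} ((!) Ss)"
  unfolding ab_diff_def[abs_def] cover_diff_def[abs_def] ab_basis_eq_covering ..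

lemma critical_elements_eq_cover_critical:
  "critical_elements T Ss = cover_critical (internal_edges T) {0..<length Ss} ((!) Ss)"
  unfolding critical_elements_def cover_critical_def ab_basis_eq_covering by auto

lemma anick_family_if_anick_numbering:
  "anick_numbering G T Ss \<Longrightarrow> anick_family {0..<length Ss} ((!) Ss)"
  unfolding anick_numbering_def anick_family_def by auto

theorem mainTheorem3:
  fixes ar :: "'m \<Rightarrow> nat"
    and G :: "'m tree set"
    and num :: "'m tree \<Rightarrow> nat list set list"
    and T :: "'m tree"
  assumes "G \<subseteq> {S. tree_monomial ar S}"
    and "\<forall>S. tree_monomial ar S \<longrightarrow> anick_numbering G S (num S)"
    and "tree_monomial ar T"
  shows "quillen_homology_dim TYPE('k::field) T (num T) = card (critical_elements T (num T))"
proof -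
  have "anick_family {0..<length (num T)} ((!) (num T))"
    using anick_family_if_anick_numbering assms(2,3) by blast
  then show ?thesis
    unfolding quillen_homology_dim_def critical_elements_eq_cover_critical chains_eq_cover_chains
      ab_diff_eq_cover_diff
    using dim_cover_homology[of "{0..<length (num T)}", where 'k='k]
    unfolding cover_cycles_def cover_boundaries_def by simp
qed

end
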